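(* Let $\Sigma$ be an alphabet with $|\Sigma| \geq 3$ and let $n \geq 1$. If $g \colon \mathcal{T}(\Sigma)^n \to \mathcal{T}(\Sigma)$ is congruence preserving, then there exists a polynomial $P_g(x_1,\ldots,x_n)$ such that $g = \widetilde{P_g}$. In other words, the algebra $\langle \mathcal{T}(\Sigma), \star\rangle$ is affine complete.
   Context: Let $\Sigma$ be an alphabet not containing $0,1$. A binary tree over $\Sigma$ is a finite set $t \subseteq \{0,1\}^*\Sigma$ such that for any $ua, vb \in t$ with $ua \neq vb$, $u$ is not a prefix of $v$ and $v$ is not a prefix of $u$. $\mathcal{T}(\Sigma)$ denotes the set of all such trees. The empty tree is denoted $\mathbf{0}$, and each letter $a\in\Sigma$ is identified with the tree $\{a\}$. The binary operation is $t \star t' = 0.t \cup 1.t'$ (prefix every word of $t$ by $0$ and every word of $t'$ by $1$); in particular $\mathbf{0}\star\mathbf{0}=\mathbf{0}$. A congruence on $\langle \mathcal{T}(\Sigma),\star\rangle$ is an equivalence relation $\sim$ on $\mathcal{T}(\Sigma)$ such that $t_1\sim t_1'$ and $t_2 \sim t_2'$ imply $t_1\star t_2 \sim t_1'\star t_2'$. A function $f\colon \mathcal{T}(\Sigma)^n \to \mathcal{T}(\Sigma)$ is congruence preserving (CP) if for every congruence $\sim$ and all $t_1,\ldots,t_n,t_1',\ldots,t_n'$, $t_i\sim t_i'$ for all $i$ implies $f(t_1,\ldots,t_n)\sim f(t_1',\ldots,t_n')$. Let $x_1,\ldots,x_n \notin \Sigma$ be variables. A polynomial $P(x_1,\ldots,x_n)$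 is a tree over the alphabet $\Sigma\cup\{x_1,\ldots,x_n\}$. Its polynomial function $\widetilde P\colon \mathcal{T}(\Sigma)^n\to\mathcal{T}(\Sigma)$ is defined, for $\vec u=\langle t_1,\ldots,t_n\rangle$, by $\widetilde P(\vec u)=P$ if $P=\mathbf 0$ or $P\in\Sigma$; $\widetilde P(\vec u)=t_i$ if $P=x_i$; and $\widetilde P(\vec u)=\widetilde{P_1}(\vec u)\star\widetilde{P_2}(\vec u)$ if $P=P_1\star P_2$. *)

theory Defs
  imports Main "HOL-Library.Sublist"
begin

text \<open>A word of \<open>{0,1}*\<Sigma>\<close> is a pair (u, a) with u a bool list
  (False = 0, True = 1) and a a letter.  Trees are sets of such words.\<close>

type_synonym 'a tree = "(bool list \<times> 'a) set"

definition is_tree :: "'a tree \<Rightarrow> bool" where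
  "is_tree t \<longleftrightarrow> finite t \<and>
     (\<forall>(u, a) \<in> t. \<forall>(v, b) \<in> t. (u, a) \<noteq> (v, b) \<longrightarrow> \<not> prefix u v \<and> \<not> prefix v u)"

definition trees :: "'a tree set" where
  "trees = {t. is_tree t}"

definition star :: "'a tree \<Rightarrow> 'a tree \<Rightarrow> 'a tree" where
  "star t t' = (\<lambda>(u, a). (False # u, a)) ` t \<union> (\<lambda>(u, a). (True # u, a)) ` t'"

definition congruence :: "('a tree \<times> 'a tree) set \<Rightarrow> bool" where
  "congruence R \<longleftrightarrow> equiv trees R \<and>
     (\<forall>t1 t1' t2 t2'. (t1, t1') \<in> R \<longrightarrow> (t2, t2') \<in> R \<longrightarrow> (star t1 t2, star t1' t2') \<in> R)"

definition congruence_preserving :: "nat \<Rightarrow> ('a tree list \<Rightarrow> 'a tree) \<Rightarrow> bool" where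
  "congruence_preserving n f \<longleftrightarrow>
     (\<forall>R. congruence R \<longrightarrow>
        (\<forall>ts ts'. length ts = n \<and> length ts' = n \<and> set ts \<subseteq> trees \<and> set ts' \<subseteq> trees \<and>
           list_all2 (\<lambda>t t'. (t, t') \<in> R) ts ts' \<longrightarrow> (f ts, f ts') \<in> R))"

text \<open>Polynomials: trees over \<open>\<Sigma> \<union> {x_1,...,x_n}\<close>; letter \<open>Inl a\<close> is \<open>a \<in> \<Sigma>\<close>,
  letter \<open>Inr i\<close> is the variable \<open>x_(i+1)\<close>.\<close>

definition is_poly :: "nat \<Rightarrow> ('a + nat) tree \<Rightarrow> bool" where
  "is_poly n P \<longleftrightarrow> is_tree P \<and> (\<forall>(u, c) \<in> P. \<forall>i. c = Inr i \<longrightarrow> i < n)"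

inductive poly_eval :: "'a tree list \<Rightarrow> ('a + nat) tree \<Rightarrow> 'a tree \<Rightarrow> bool" for ts where
  pe_zero: "poly_eval ts {} {}"
| pe_letter: "poly_eval ts {([], Inl a)} {([], a)}"
| pe_var: "poly_eval ts {([], Inr i)} (ts ! i)"
| pe_star: "poly_eval ts P1 r1 \<Longrightarrow> poly_eval ts P2 r2 \<Longrightarrow>
              poly_eval ts (star P1 P2) (star r1 r2)"

definition poly_fun :: "('a + nat) tree \<Rightarrow> 'a tree list \<Rightarrow> 'a tree" where
  "poly_fun P ts = (THE r. poly_eval ts P r)"

end

theory Submission
  imports Defs
begin

text \<open>Kernels of star homomorphisms are congruences, so a congruence preserving \<open>g\<close> commutes with
  every star homomorphism up to its kernel.  Relabelings of letters are such homomorphisms: on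
  arguments that are leaves labelled in a three-letter set \<open>{a, b, c}\<close>, the value of \<open>g\<close> has a fixed
  shape, and the label at each of its positions, as a function of the argument letters, respects
  every identification of letters.  On three letters such a function is a projection or a constant,
  which defines a polynomial \<open>P\<close> agreeing with \<open>g\<close> on leaf arguments.  Grafting at the letter \<open>l\<close>
  the solution of \<open>Y = t[l := Y]\<close> is a homomorphism identifying an argument \<open>t\<close> with \<open>leaf l\<close>;
  doing this for two letters gives a jointly injective pair of homomorphisms, so the agreement of
  \<open>g\<close> and \<open>P\<close> spreads from leaf arguments to arbitrary trees, one argument at a time.\<close>

definition tuples :: "nat \<Rightarrow> 'b set \<Rightarrow> 'b list set" where
  "tuples n A = {xs. length xs = n \<and> set xs \<subseteq> A}"

lemma mem_tuples: "xs \<in> tuples n A \<longleftrightarrow> length xs = n \<and> set xs \<subseteq> A"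
  by (simp add: tuples_def)

lemma tuples_nth: "xs \<in> tuples n A \<Longrightarrow> i < n \<Longrightarrow> xs ! i \<in> A"
  unfolding mem_tuples by (metis nth_mem subsetD)

lemma tuples_update: "xs \<in> tuples n A \<Longrightarrow> w \<in> A \<Longrightarrow> xs[j := w] \<in> tuples n A"
  unfolding mem_tuples using set_update_subset_insert by fastforce

lemma tuples_mono: "A \<subseteq> B \<Longrightarrow> tuples n A \<subseteq> tuples n B"
  unfolding tuples_def by auto

lemma tuples_image: "ts \<in> tuples n (f ` A) \<Longrightarrow> \<exists>xs \<in> tuples n A. ts = map f xs"
proof (induction ts arbitrary: n)
  case Nil
  then show ?case
    by (simp add: mem_tuples)
next
  case (Cons t ts)
  obtain x where "x \<in> A" "t = f x"
    using Cons.prems by (auto simp: mem_tuples)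
  moreover obtain xs where "xs \<in> tuples (n - 1) A" "ts = map f xs"
    using Cons.IH[of "n - 1"] Cons.prems by (auto simp: mem_tuples)
  ultimately show ?case
    using Cons.prems by (intro bexI[of _ "x # xs"]) (auto simp: mem_tuples)
qed

lemma is_tree_iff_prefix:
  "is_tree t \<longleftrightarrow> finite t \<and>
     (\<forall>u a v b. (u, a) \<in> t \<longrightarrow> (v, b) \<in> t \<longrightarrow> prefix u v \<longrightarrow> u = v \<and> a = b)"
  unfolding is_tree_def by (simp add: Ball_def) blast

lemma is_tree_prefixD:
  "is_tree t \<Longrightarrow> (u, a) \<in> t \<Longrightarrow> (v, b) \<in> t \<Longrightarrow> prefix u v \<Longrightarrow> u = v \<and> a = b"
  unfolding is_tree_iff_prefix by blast

definition leaf :: "'a \<Rightarrow> 'a tree" where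
  "leaf m = {([], m)}"

lemma is_tree_leaf: "is_tree (leaf m)"
  unfolding is_tree_def leaf_def by auto

lemma map_leaf_in_tuples: "length xs = n \<Longrightarrow> map leaf xs \<in> tuples n trees"
  using is_tree_leaf by (auto simp: mem_tuples trees_def)

lemma is_tree_root: "is_tree t \<Longrightarrow> ([], m) \<in> t \<Longrightarrow> t = leaf m"
  unfolding leaf_def using is_tree_prefixD[of t "[]" m] by fastforce

lemma mem_star:
  "(x, m) \<in> star t t' \<longleftrightarrow> (\<exists>u. x = False # u \<and> (u, m) \<in> t) \<or> (\<exists>u. x = True # u \<and> (u, m) \<in> t')"
  unfolding star_def by auto

lemma Cons_mem_star: "(d # x, m) \<in> star t t' \<longleftrightarrow> (x, m) \<in> (if d then t' else t)"
  by (cases d) (auto simp: mem_star)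

lemma Nil_notin_star: "([], m) \<notin> star t t'"
  by (simp add: mem_star)

lemma star_eqI:
  assumes "\<And>m. ([], m) \<notin> s" and "\<And>d x m. (d # x, m) \<in> s \<longleftrightarrow> (x, m) \<in> (if d then t' else t)"
  shows "s = star t t'"
proof (rule set_eqI)
  fix p :: "bool list \<times> 'a"
  obtain x m where p: "p = (x, m)"
    by fastforce
  show "p \<in> s \<longleftrightarrow> p \<in> star t t'"
    unfolding p using assms by (cases x) (simp_all add: Cons_mem_star Nil_notin_star)
qed

lemma ball_star:
  "(\<forall>(u, c) \<in> star t t'. Q c) \<longleftrightarrow> (\<forall>(u, c) \<in> t. Q c) \<and> (\<forall>(u, c) \<in> t'. Q c)"
  unfolding star_def by auto

lemma is_tree_star:
  assumes "is_tree t" "is_tree t'"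
  shows "is_tree (star t t')"
proof -
  have "finite (star t t')"
    using assms unfolding is_tree_def star_def by simp
  moreover have "u = v \<and> a = b"
    if "(u, a) \<in> star t t'" "(v, b) \<in> star t t'" "prefix u v" for u a v b
    using that assms is_tree_prefixD[of t] is_tree_prefixD[of t'] unfolding mem_star by auto
  ultimately show ?thesis
    unfolding is_tree_iff_prefix by blast
qed

definition subtree :: "bool \<Rightarrow> 'a tree \<Rightarrow> 'a tree" where
  "subtree d t = (\<lambda>(u, m). (d # u, m)) -` t"

lemma is_tree_subtree:
  assumes "is_tree t"
  shows "is_tree (subtree d t)"
proof -
  have "inj (\<lambda>(u, m :: 'a). (d # u, m))"
    by (auto intro: injI)
  then have "finite (subtree d t)"
    using assms unfolding is_tree_def subtree_def by (simp add: finite_vimageI)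
  moreover have "u = v \<and> a = b"
    if "(u, a) \<in> subtree d t" "(v, b) \<in> subtree d t" "prefix u v" for u a v b
    using that is_tree_prefixD[OF assms, of "d # u" a "d # v" b] unfolding subtree_def by simp
  ultimately show ?thesis
    unfolding is_tree_iff_prefix by blast
qed

lemma star_subtree:
  assumes "\<And>m. ([], m) \<notin> t"
  shows "star (subtree False t) (subtree True t) = t"
  by (rule star_eqI[symmetric]) (use assms in \<open>auto simp: subtree_def\<close>)

lemma is_tree_induct [consumes 1, case_names empty root star]:
  assumes "is_tree t"
    and empty: "Q {}"
    and root: "\<And>c. Q {([], c)}"
    and star: "\<And>t0 t1. is_tree t0 \<Longrightarrow> is_tree t1 \<Longrightarrow> Q t0 \<Longrightarrow> Q t1 \<Longrightarrow> Q (star t0 t1)"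
  shows "Q t"
proof -
  have "Q t" if "is_tree t" "\<forall>(u, c) \<in> t. length u \<le> N" for t N
    using that
  proof (induction N arbitrary: t)
    case 0
    then have "t = {} \<or> (\<exists>c. t = leaf c)"
      using is_tree_root by fastforce
    then show ?case
      using empty root unfolding leaf_def by blast
  next
    case (Suc N)
    show ?case
    proof (cases "\<exists>c. ([], c) \<in> t")
      case True
      then show ?thesis
        using is_tree_root[OF Suc.prems(1)] root unfolding leaf_def by blast
    next
      case False
      have "Q (subtree d t)" for d
        using Suc.IH[OF is_tree_subtree[OF Suc.prems(1)]] Suc.prems(2)
        unfolding subtree_def by fastforce
      then show ?thesis
        using star[OF is_tree_subtree is_tree_subtree] Suc.prems(1) star_subtree False by metis
    qed
  qed
  moreover obtain N where "\<forall>(u, c) \<in> t. length u \<le> N"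
    using assms(1) finite_nat_set_iff_bounded_le[of "length ` fst ` t"]
    unfolding is_tree_def by fastforce
  ultimately show ?thesis
    using assms(1) by blast
qed

definition label :: "'a tree \<Rightarrow> bool list \<Rightarrow> 'a" where
  "label t u = (THE m. (u, m) \<in> t)"

lemma label_eq: "is_tree t \<Longrightarrow> (u, m) \<in> t \<Longrightarrow> label t u = m"
  unfolding label_def using is_tree_prefixD[of t u m u] by (blast intro: the_equality)

lemma graph_label: "is_tree t \<Longrightarrow> (\<lambda>u. (u, label t u)) ` fst ` t = t"
  using label_eq by (force simp: image_iff)

lemma is_tree_graph:
  assumes "is_tree t"
  shows "is_tree ((\<lambda>u. (u, f u)) ` fst ` t)"
proof -
  have prefix_free: "u = v" if "u \<in> fst ` t" "v \<in> fst ` t" "prefix u v" for u v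
    using that is_tree_prefixD[OF assms] by force
  have "u = v \<and> c = d"
    if "(u, c) \<in> (\<lambda>u. (u, f u)) ` fst ` t" "(v, d) \<in> (\<lambda>u. (u, f u)) ` fst ` t" "prefix u v"
    for u c v d
  proof -
    have "u \<in> fst ` t" "v \<in> fst ` t" "c = f u" "d = f v"
      using that(1,2) by auto
    moreover have "u = v"
      using prefix_free \<open>u \<in> fst ` t\<close> \<open>v \<in> fst ` t\<close> \<open>prefix u v\<close> .
    ultimately show ?thesis
      by simp
  qed
  moreover have "finite ((\<lambda>u. (u, f u)) ` fst ` t)"
    using assms unfolding is_tree_def by simp
  ultimately show ?thesis
    unfolding is_tree_iff_prefix by blast
qed

section \<open>Star homomorphisms\<close>

definition star_hom :: "('a tree \<Rightarrow> 'b tree) \<Rightarrow> bool" where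
  "star_hom h \<longleftrightarrow> (\<forall>t t'. h (star t t') = star (h t) (h t'))"

lemma congruence_kernel:
  assumes "star_hom h"
  shows "congruence {(t, t'). is_tree t \<and> is_tree t' \<and> h t = h t'}"
  using assms is_tree_star
  unfolding congruence_def star_hom_def equiv_def refl_on_def sym_def trans_def trees_def
  by auto

lemma congruence_preserving_hom_eq:
  assumes cp: "congruence_preserving n f" and hom: "star_hom h"
    and ts: "ts \<in> tuples n trees" and ts': "ts' \<in> tuples n trees"
    and eq: "\<forall>i<n. h (ts ! i) = h (ts' ! i)"
  shows "h (f ts) = h (f ts')"
proof -
  let ?R = "{(t, t'). is_tree t \<and> is_tree t' \<and> h t = h t'}"
  have "(ts ! i, ts' ! i) \<in> ?R" if "i < n" for i
  proof -
    have "ts ! i \<in> trees" "ts' ! i \<in> trees"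
      using ts ts' that by (simp_all add: tuples_nth)
    then show ?thesis
      using eq that unfolding trees_def by simp
  qed
  then have "list_all2 (\<lambda>t t'. (t, t') \<in> ?R) ts ts'"
    using ts ts' by (simp add: list_all2_conv_all_nth mem_tuples)
  moreover have "congruence ?R"
    using hom by (rule congruence_kernel)
  ultimately have "(f ts, f ts') \<in> ?R"
    using cp ts ts' unfolding congruence_preserving_def mem_tuples by blast
  then show ?thesis
    by simp
qed

definition relabel :: "('a \<Rightarrow> 'a) \<Rightarrow> 'a tree \<Rightarrow> 'a tree" where
  "relabel \<rho> t = (\<lambda>(u, m). (u, \<rho> m)) ` t"

lemma star_hom_relabel: "star_hom (relabel \<rho>)"
  unfolding star_hom_def relabel_def star_def by (auto simp: image_iff)

lemma relabel_leaf: "relabel \<rho> (leaf m) = leaf (\<rho> m)"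
  unfolding relabel_def leaf_def by simp

lemma fst_relabel: "fst ` relabel \<rho> t = fst ` t"
  unfolding relabel_def by (force simp: image_iff)

lemma label_relabel:
  assumes "is_tree t" "is_tree t'" "u \<in> fst ` t" "relabel \<rho> t = relabel \<rho> t'"
  shows "\<rho> (label t u) = \<rho> (label t' u)"
proof -
  have "(u, \<rho> (label t u)) \<in> relabel \<rho> t'"
    using assms(1,3,4) graph_label unfolding relabel_def by (metis (no_types, lifting) image_eqI case_prod_conv)
  then obtain m where "(u, m) \<in> t'" "\<rho> m = \<rho> (label t u)"
    unfolding relabel_def by force
  then show ?thesis
    using label_eq[OF assms(2)] by simp
qed

definition graft :: "'a \<Rightarrow> 'a tree \<Rightarrow> 'a tree \<Rightarrow> 'a tree" where
  "graft l Y t = {(u, m). (u, m) \<in> t \<and> m \<noteq> l} \<union> {(v @ y, m) | v y m. (v, l) \<in> t \<and> (y, m) \<in> Y}"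

lemma mem_graft:
  "(x, m) \<in> graft l Y t \<longleftrightarrow> ((x, m) \<in> t \<and> m \<noteq> l) \<or> (\<exists>v y. x = v @ y \<and> (v, l) \<in> t \<and> (y, m) \<in> Y)"
  unfolding graft_def by blast

lemma star_hom_graft: "star_hom (graft l Y)"
  unfolding star_hom_def
proof (intro allI star_eqI)
  fix t t' :: "'a tree" and d x m
  show "([], m) \<notin> graft l Y (star t t')"
    by (simp add: mem_graft Nil_notin_star)
  have "(x, m) \<in> graft l Y (if d then t' else t)" if "(d # x, m) \<in> graft l Y (star t t')"
    using that unfolding mem_graft by (auto simp: Cons_mem_star Nil_notin_star Cons_eq_append_conv)
  moreover have "(d # x, m) \<in> graft l Y (star t t')" if "(x, m) \<in> graft l Y (if d then t' else t)"
    using that unfolding mem_graft by (metis Cons_mem_star append_Cons)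
  ultimately show "(d # x, m) \<in> graft l Y (star t t') \<longleftrightarrow>
      (x, m) \<in> (if d then graft l Y t' else graft l Y t)"
    by (cases d) auto
qed

lemma graft_leaf: "graft l Y (leaf l) = Y"
  unfolding graft_def leaf_def by auto

text \<open>For \<open>t \<noteq> leaf l\<close> containing an \<open>l\<close>-leaf this is an infinite set of words: the solution
  \<open>Y\<close> of \<open>Y = graft l Y t\<close>, so that \<open>graft l Y\<close> identifies \<open>t\<close> with \<open>leaf l\<close>.\<close>

definition graft_fixpoint :: "'a \<Rightarrow> 'a tree \<Rightarrow> 'a tree" where
  "graft_fixpoint l t =
     {(concat us @ w, m) | us w m. (\<forall>u \<in> set us. (u, l) \<in> t) \<and> (w, m) \<in> t \<and> m \<noteq> l}"

lemma mem_graft_fixpoint: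
  "(x, m) \<in> graft_fixpoint l t \<longleftrightarrow>
     (\<exists>us w. x = concat us @ w \<and> (\<forall>u \<in> set us. (u, l) \<in> t) \<and> (w, m) \<in> t \<and> m \<noteq> l)"
  unfolding graft_fixpoint_def by blast

lemma graft_graft_fixpoint: "graft l (graft_fixpoint l t) t = graft_fixpoint l t"
proof (rule subset_antisym; rule subrelI)
  fix x m
  assume "(x, m) \<in> graft l (graft_fixpoint l t) t"
  then consider "(x, m) \<in> t" "m \<noteq> l"
    | v us w where "x = concat (v # us) @ w" "\<forall>u \<in> set (v # us). (u, l) \<in> t" "(w, m) \<in> t" "m \<noteq> l"
    unfolding mem_graft mem_graft_fixpoint by auto
  then show "(x, m) \<in> graft_fixpoint l t"
  proof cases
    case 1
    then have "x = concat [] @ x" "\<forall>u \<in> set []. (u, l) \<in> t"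
      by simp_all
    with 1 show ?thesis
      unfolding mem_graft_fixpoint by blast
  next
    case 2
    then show ?thesis
      unfolding mem_graft_fixpoint by blast
  qed
next
  fix x m
  assume "(x, m) \<in> graft_fixpoint l t"
  then obtain us w where x: "x = concat us @ w"
    and us: "\<forall>u \<in> set us. (u, l) \<in> t" and w: "(w, m) \<in> t" "m \<noteq> l"
    unfolding mem_graft_fixpoint by blast
  show "(x, m) \<in> graft l (graft_fixpoint l t) t"
  proof (cases us)
    case Nil
    then show ?thesis
      using x w unfolding mem_graft by simp
  next
    case (Cons v us')
    then have "(concat us' @ w, m) \<in> graft_fixpoint l t"
      using us w unfolding mem_graft_fixpoint by auto
    then show ?thesis
      using x us Cons unfolding mem_graft by auto
  qed
qed

lemma root_notin_graft_fixpoint: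
  assumes "is_tree t" "t \<noteq> leaf c"
  shows "([], c) \<notin> graft_fixpoint l t"
proof
  assume "([], c) \<in> graft_fixpoint l t"
  then have "([], c) \<in> t"
    unfolding graft_fixpoint_def by auto
  then show False
    using assms is_tree_root by metis
qed

lemma graft_eq_imp_mem:
  assumes t: "is_tree t" and u: "(u, m) \<in> t" and m: "m \<noteq> l" and l: "l \<noteq> l'"
    and eq: "graft l Y t = graft l Y t'" and eq': "graft l' Y' t = graft l' Y' t'"
  shows "(u, m) \<in> t' \<or> ((u, l) \<in> t' \<and> ([], m) \<in> Y)"
proof -
  have "(u, m) \<in> graft l Y t"
    using u m by (simp add: mem_graft)
  then consider "(u, m) \<in> t'" | v y where "u = v @ y" "(v, l) \<in> t'" "(y, m) \<in> Y"
    unfolding eq mem_graft by auto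
  then show ?thesis
  proof cases
    case (2 v y)
    have "y = []"
    proof (rule ccontr)
      assume "y \<noteq> []"
      have "(v, l) \<in> graft l' Y' t'"
        using 2(2) l by (simp add: mem_graft)
      then obtain v' c where v': "prefix v' v" "(v', c) \<in> t"
        unfolding eq'[symmetric] mem_graft by (auto intro: prefixI)
      have "prefix v u" "v \<noteq> u"
        using 2(1) \<open>y \<noteq> []\<close> by auto
      then have "prefix v' u" "v' \<noteq> u"
        using v'(1) prefix_order.order_trans prefix_order.antisym by blast+
      then show False
        using is_tree_prefixD[OF t v'(2) u] by simp
    qed
    then show ?thesis
      using 2 by simp
  qed simp
qed

lemma graft_pair_subset:
  assumes t: "is_tree t" and t': "is_tree t'" and ab: "a \<noteq> b"
    and a: "([], a) \<notin> Y'" and b: "([], b) \<notin> Y"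
    and eq: "graft a Y t = graft a Y t'" and eq': "graft b Y' t = graft b Y' t'"
  shows "t \<subseteq> t'"
proof (rule subrelI)
  fix u m
  assume u: "(u, m) \<in> t"
  consider "m = a" | "m = b" | "m \<noteq> a" "m \<noteq> b"
    by blast
  then show "(u, m) \<in> t'"
  proof cases
    case 1
    then show ?thesis
      using graft_eq_imp_mem[OF t u _ ab[symmetric] eq' eq] ab a by simp
  next
    case 2
    then show ?thesis
      using graft_eq_imp_mem[OF t u _ ab eq eq'] ab b by simp
  next
    case 3
    have "\<not> ((u, a) \<in> t' \<and> (u, b) \<in> t')"
      using is_tree_prefixD[OF t', of u a u b] ab by auto
    then show ?thesis
      using graft_eq_imp_mem[OF t u 3(1) ab eq eq'] graft_eq_imp_mem[OF t u 3(2) ab[symmetric] eq' eq]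
      by blast
  qed
qed

section \<open>Polynomial functions\<close>

definition poly_subst :: "('a + nat) tree \<Rightarrow> 'a tree list \<Rightarrow> 'a tree" where
  "poly_subst P ts =
     {(u, m). (u, Inl m) \<in> P} \<union> {(u @ w, m) | u w m i. (u, Inr i) \<in> P \<and> (w, m) \<in> ts ! i}"

lemma mem_poly_subst:
  "(x, m) \<in> poly_subst P ts \<longleftrightarrow>
     (x, Inl m) \<in> P \<or> (\<exists>u w i. x = u @ w \<and> (u, Inr i) \<in> P \<and> (w, m) \<in> ts ! i)"
  unfolding poly_subst_def by blast

lemma poly_subst_empty: "poly_subst {} ts = {}"
  unfolding poly_subst_def by simp

lemma poly_subst_letter: "poly_subst {([], Inl a)} ts = leaf a"
  unfolding poly_subst_def leaf_def by auto

lemma poly_subst_var: "poly_subst {([], Inr i)} ts = ts ! i"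
  unfolding poly_subst_def by auto

lemma poly_subst_star: "poly_subst (star P P') ts = star (poly_subst P ts) (poly_subst P' ts)"
proof (rule star_eqI)
  fix d x m
  show "([], m) \<notin> poly_subst (star P P') ts"
    by (simp add: mem_poly_subst Nil_notin_star)
  have "(x, m) \<in> poly_subst (if d then P' else P) ts" if "(d # x, m) \<in> poly_subst (star P P') ts"
    using that unfolding mem_poly_subst by (auto simp: Cons_mem_star Nil_notin_star Cons_eq_append_conv)
  moreover have "(d # x, m) \<in> poly_subst (star P P') ts" if "(x, m) \<in> poly_subst (if d then P' else P) ts"
    using that unfolding mem_poly_subst by (metis Cons_mem_star append_Cons)
  ultimately show "(d # x, m) \<in> poly_subst (star P P') ts \<longleftrightarrow>
      (x, m) \<in> (if d then poly_subst P' ts else poly_subst P ts)"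
    by (cases d) auto
qed

lemma poly_eval_imp_eq_poly_subst: "poly_eval ts P r \<Longrightarrow> r = poly_subst P ts"
  by (induction rule: poly_eval.induct)
    (simp_all add: poly_subst_empty poly_subst_letter[unfolded leaf_def] poly_subst_var poly_subst_star)

lemma poly_eval_poly_subst:
  assumes "is_tree P"
  shows "poly_eval ts P (poly_subst P ts)"
  using assms
proof (induction rule: is_tree_induct)
  case empty
  then show ?case
    using pe_zero by (simp add: poly_subst_empty)
next
  case (root c)
  then show ?case
    using pe_letter pe_var
    by (cases c) (simp_all add: poly_subst_letter[unfolded leaf_def] poly_subst_var)
next
  case (star P P')
  then show ?case
    using pe_star by (simp add: poly_subst_star)
qed

lemma poly_fun_eq_poly_subst: "is_tree P \<Longrightarrow> poly_fun P ts = poly_subst P ts"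
  unfolding poly_fun_def
  using poly_eval_poly_subst poly_eval_imp_eq_poly_subst by (rule the_equality)

lemma is_tree_poly_subst:
  assumes P: "is_poly n P" and ts: "ts \<in> tuples n trees"
  shows "is_tree (poly_subst P ts)"
proof -
  have "is_tree P" "\<forall>(u, c) \<in> P. \<forall>i. c = Inr i \<longrightarrow> i < n"
    using P unfolding is_poly_def by auto
  then show ?thesis
  proof (induction rule: is_tree_induct)
    case empty
    then show ?case
      by (simp add: poly_subst_empty is_tree_def)
  next
    case (root c)
    then show ?case
      using tuples_nth[OF ts] is_tree_leaf
      by (cases c) (auto simp: poly_subst_letter poly_subst_var trees_def)
  next
    case (star P P')
    then show ?case
      by (simp add: poly_subst_star ball_star is_tree_star)
  qed
qed

lemma congruence_preserving_poly_subst: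
  assumes P: "is_poly n P"
  shows "congruence_preserving n (poly_subst P)"
  unfolding congruence_preserving_def
proof (intro allI impI)
  fix R and ts ts' :: "'a tree list"
  assume R: "congruence R"
    and ts: "length ts = n \<and> length ts' = n \<and> set ts \<subseteq> trees \<and> set ts' \<subseteq> trees \<and>
      list_all2 (\<lambda>t t'. (t, t') \<in> R) ts ts'"
  have refl: "(t, t) \<in> R" if "is_tree t" for t
    using R that unfolding congruence_def equiv_def refl_on_def trees_def by blast
  have "is_tree P" "\<forall>(u, c) \<in> P. \<forall>i. c = Inr i \<longrightarrow> i < n"
    using P unfolding is_poly_def by auto
  then show "(poly_subst P ts, poly_subst P ts') \<in> R"
  proof (induction rule: is_tree_induct)
    case empty
    then show ?case
      using refl by (simp add: poly_subst_empty is_tree_def)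
  next
    case (root c)
    then show ?case
      using refl[OF is_tree_leaf] ts list_all2_nthD
      by (cases c) (auto simp: poly_subst_letter poly_subst_var)
  next
    case (star P P')
    then show ?case
      using R unfolding congruence_def by (simp add: poly_subst_star ball_star)
  qed
qed

lemma poly_subst_map_leaf:
  assumes "\<forall>(u, c) \<in> P. \<forall>i. c = Inr i \<longrightarrow> i < length xs"
  shows "poly_subst P (map leaf xs) = (\<lambda>(u, c). (u, case_sum id ((!) xs) c)) ` P"
  using assms unfolding poly_subst_def leaf_def by (force simp: image_iff split: sum.splits)

section \<open>Agreement on two leaves propagates to all trees\<close>

lemma congruence_preserving_graft_fixpoint:
  assumes cp: "congruence_preserving n f" and ts: "ts \<in> tuples n trees" and k: "k < n"
  shows "graft l (graft_fixpoint l (ts ! k)) (f ts) = graft l (graft_fixpoint l (ts ! k)) (f (ts[k := leaf l]))"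
proof -
  let ?h = "graft l (graft_fixpoint l (ts ! k))"
  have ts': "ts[k := leaf l] \<in> tuples n trees"
    by (rule tuples_update[OF ts]) (simp add: trees_def is_tree_leaf)
  have "?h (ts ! k) = ?h (leaf l)"
    unfolding graft_graft_fixpoint graft_leaf ..
  moreover have "length ts = n"
    using ts by (simp add: mem_tuples)
  ultimately have "\<forall>i<n. ?h (ts ! i) = ?h (ts[k := leaf l] ! i)"
    using k by (simp add: nth_list_update)
  then show ?thesis
    using congruence_preserving_hom_eq[OF cp star_hom_graft ts ts'] by blast
qed

lemma congruence_preserving_eq_if_eq_at_leaf_updates:
  assumes cp: "congruence_preserving n f" "congruence_preserving n f'"
    and trees: "is_tree (f ts)" "is_tree (f' ts)"
    and ts: "ts \<in> tuples n trees" and k: "k < n" and ab: "a \<noteq> b"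
    and not_leaf: "ts ! k \<noteq> leaf a" "ts ! k \<noteq> leaf b"
    and eq: "\<And>l. l \<in> {a, b} \<Longrightarrow> f (ts[k := leaf l]) = f' (ts[k := leaf l])"
  shows "f ts = f' ts"
proof -
  let ?Y = "\<lambda>l. graft_fixpoint l (ts ! k)"
  have graft_eq: "graft l (?Y l) (f ts) = graft l (?Y l) (f' ts)" if "l \<in> {a, b}" for l
    using congruence_preserving_graft_fixpoint[OF cp(1) ts k]
      congruence_preserving_graft_fixpoint[OF cp(2) ts k] eq[OF that]
    by simp
  have root: "([], c) \<notin> ?Y l" if "c \<in> {a, b}" for c l
  proof -
    have "is_tree (ts ! k)"
      using tuples_nth[OF ts k] unfolding trees_def by simp
    moreover have "ts ! k \<noteq> leaf c"
      using not_leaf that by blast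
    ultimately show ?thesis
      by (rule root_notin_graft_fixpoint)
  qed
  have "f ts \<subseteq> f' ts" "f' ts \<subseteq> f ts"
    using graft_pair_subset[OF trees ab root root graft_eq graft_eq]
      graft_pair_subset[OF trees(2,1) ab root root graft_eq[symmetric] graft_eq[symmetric]]
    by simp_all
  then show ?thesis
    by (rule subset_antisym)
qed

lemma congruence_preserving_eq_if_eq_on_leaves:
  assumes cp: "congruence_preserving n f" "congruence_preserving n f'"
    and trees: "\<forall>ts \<in> tuples n trees. is_tree (f ts) \<and> is_tree (f' ts)"
    and ab: "a \<noteq> b"
    and eq: "\<forall>xs \<in> tuples n {a, b}. f (map leaf xs) = f' (map leaf xs)"
    and ts: "ts \<in> tuples n trees"
  shows "f ts = f' ts"
  using ts
proof (induction "card {i. i < n \<and> ts ! i \<notin> leaf ` {a, b}}" arbitrary: ts rule: less_induct)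
  case less
  let ?B = "\<lambda>ts. {i. i < n \<and> ts ! i \<notin> leaf ` {a, b}}"
  show ?case
  proof (cases "\<exists>k<n. ts ! k \<notin> leaf ` {a, b}")
    case True
    then obtain k where k: "k < n" "ts ! k \<notin> leaf ` {a, b}"
      by blast
    have "f (ts[k := leaf l]) = f' (ts[k := leaf l])" if "l \<in> {a, b}" for l
    proof (rule less.hyps)
      have len: "length ts = n"
        using less.prems by (simp add: mem_tuples)
      have "?B (ts[k := leaf l]) = ?B ts - {k}"
        using that k len by (auto simp: nth_list_update)
      moreover have "card (?B ts - {k}) < card (?B ts)"
        by (rule card_Diff1_less) (use k in auto)
      ultimately show "card (?B (ts[k := leaf l])) < card (?B ts)"
        by simp
      show "ts[k := leaf l] \<in> tuples n trees"
        by (rule tuples_update[OF less.prems]) (simp add: trees_def is_tree_leaf)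
    qed
    moreover have "is_tree (f ts)" "is_tree (f' ts)"
      using trees less.prems by simp_all
    moreover have "ts ! k \<noteq> leaf a" "ts ! k \<noteq> leaf b"
      using k(2) by simp_all
    ultimately show ?thesis
      using congruence_preserving_eq_if_eq_at_leaf_updates[OF cp _ _ less.prems k(1) ab] by simp
  next
    case False
    then have "set ts \<subseteq> leaf ` {a, b}"
      using less.prems unfolding mem_tuples by (metis in_set_conv_nth subsetI)
    then have "ts \<in> tuples n (leaf ` {a, b})"
      using less.prems by (simp add: mem_tuples)
    then obtain xs where "xs \<in> tuples n {a, b}" "ts = map leaf xs"
      using tuples_image by blast
    then show ?thesis
      using eq by simp
  qed
qed

section \<open>Functions on three letters compatible with all relabelings\<close>

lemma tuples_update_induct:
  assumes xs: "xs \<in> tuples n A" and ys: "ys \<in> tuples n A" and "Q xs"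
    and step: "\<And>zs j w. zs \<in> tuples n A \<Longrightarrow> j < n \<Longrightarrow> w \<in> A \<Longrightarrow> Q zs \<Longrightarrow> Q (zs[j := w])"
  shows "Q ys"
proof -
  have "take k ys @ drop k xs \<in> tuples n A \<and> Q (take k ys @ drop k xs)" if "k \<le> n" for k
    using that
  proof (induction k)
    case 0
    then show ?case
      using xs \<open>Q xs\<close> by simp
  next
    case (Suc k)
    then have zs: "take k ys @ drop k xs \<in> tuples n A" "Q (take k ys @ drop k xs)"
      by simp_all
    have "take (Suc k) ys @ drop (Suc k) xs = (take k ys @ drop k xs)[k := ys ! k]"
      using xs ys Suc.prems
      by (auto simp: mem_tuples list_eq_iff_nth_eq nth_append nth_list_update min_def)
    moreover have "ys ! k \<in> A"
      using tuples_nth[OF ys] Suc.prems by simp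
    ultimately show ?case
      using tuples_update[OF zs(1)] step[OF zs(1) _ _ zs(2)] Suc.prems by simp
  qed
  then have "Q (take n ys @ drop n xs)"
    by blast
  then show ?thesis
    using xs ys by (simp add: mem_tuples)
qed

definition collapse :: "'b \<Rightarrow> 'b \<Rightarrow> 'b \<Rightarrow> 'b" where
  "collapse x y z = (if z = x then y else z)"

lemma collapse_eq_iff:
  "collapse x y p = collapse x y q \<longleftrightarrow> p = q \<or> (p = x \<and> q = y) \<or> (p = y \<and> q = x)"
  unfolding collapse_def by auto

locale relabeling_compatible =
  fixes \<phi> :: "'b list \<Rightarrow> 'b" and a b c :: 'b and n :: nat
  assumes distinct: "a \<noteq> b" "a \<noteq> c" "b \<noteq> c"
    and compatible: "\<And>(\<rho> :: 'b \<Rightarrow> 'b) xs ys. xs \<in> tuples n {a, b, c} \<Longrightarrow> ys \<in> tuples n {a, b, c} \<Longrightarrow>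
      map \<rho> xs = map \<rho> ys \<Longrightarrow> \<rho> (\<phi> xs) = \<rho> (\<phi> ys)"
begin

lemma collapse_update:
  assumes "xs \<in> tuples n {a, b, c}" "x \<in> {a, b, c}" "y \<in> {a, b, c}"
  shows "collapse x y (\<phi> (xs[i := x])) = collapse x y (\<phi> (xs[i := y]))"
  by (rule compatible) (use assms in \<open>simp_all add: tuples_update map_update collapse_def\<close>)

lemma slice_const_or_id:
  assumes xs: "xs \<in> tuples n {a, b, c}"
  shows "(\<forall>v \<in> {a, b, c}. \<phi> (xs[i := v]) = \<phi> (xs[i := a])) \<or> (\<forall>v \<in> {a, b, c}. \<phi> (xs[i := v]) = v)"
proof -
  define p q r where "p = \<phi> (xs[i := a])" and "q = \<phi> (xs[i := b])" and "r = \<phi> (xs[i := c])"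
  have "collapse a b p = collapse a b q" "collapse a c p = collapse a c r" "collapse b c q = collapse b c r"
    unfolding p_def q_def r_def
    by (simp_all add: collapse_update[OF xs, of a b i] collapse_update[OF xs, of a c i]
      collapse_update[OF xs, of b c i])
  then have "(p = q \<and> p = r) \<or> (p = a \<and> q = b \<and> r = c)"
    using distinct unfolding collapse_eq_iff by blast
  then show ?thesis
    unfolding p_def q_def r_def by auto
qed

lemma slice_id_nth:
  assumes xs: "xs \<in> tuples n {a, b, c}" and ij: "i \<noteq> j" and j: "j < n"
    and w: "w \<in> {a, b, c}" and x: "x \<in> {a, b, c}"
    and id: "\<forall>v \<in> {a, b, c}. \<phi> (xs[i := v]) = v" and changed: "\<phi> (xs[j := w, i := x]) \<noteq> x"
  shows "x = xs ! j"
proof -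
  have unchanged: "xs[i := x, j := xs ! j] = xs[i := x]"
    using ij by (metis list_update_id nth_list_update_neq)
  have id_x: "\<phi> (xs[i := x]) = x"
    using id x by blast
  have xs_j: "xs ! j \<in> {a, b, c}"
    using tuples_nth[OF xs j] .
  from slice_const_or_id[OF tuples_update[OF xs x], where i = j] show ?thesis
  proof
    assume "\<forall>v \<in> {a, b, c}. \<phi> (xs[i := x, j := v]) = \<phi> (xs[i := x, j := a])"
    then have "\<phi> (xs[i := x, j := w]) = \<phi> (xs[i := x, j := xs ! j])"
      using w xs_j by metis
    then have "\<phi> (xs[j := w, i := x]) = x"
      using list_update_swap[OF ij] unchanged id_x by metis
    with changed show ?thesis
      by simp
  next
    assume "\<forall>v \<in> {a, b, c}. \<phi> (xs[i := x, j := v]) = v"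
    then have "\<phi> (xs[i := x, j := xs ! j]) = xs ! j"
      using xs_j by blast
    then show ?thesis
      using unchanged id_x by simp
  qed
qed

lemma slice_id_update:
  assumes xs: "xs \<in> tuples n {a, b, c}" and ij: "i \<noteq> j" and j: "j < n" and w: "w \<in> {a, b, c}"
    and id: "\<forall>v \<in> {a, b, c}. \<phi> (xs[i := v]) = v"
  shows "\<forall>v \<in> {a, b, c}. \<phi> (xs[j := w, i := v]) = v"
proof (rule ccontr)
  assume "\<not> ?thesis"
  then have const: "\<forall>v \<in> {a, b, c}. \<phi> (xs[j := w, i := v]) = \<phi> (xs[j := w, i := a])"
    using slice_const_or_id[OF tuples_update[OF xs w]] by blast
  obtain x y where x: "x \<in> {a, b, c}" "x \<noteq> \<phi> (xs[j := w, i := a])"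
    and y: "y \<in> {a, b, c}" "y \<noteq> \<phi> (xs[j := w, i := a])" and "x \<noteq> y"
    by (cases "\<phi> (xs[j := w, i := a]) = a"; cases "\<phi> (xs[j := w, i := a]) = b") (use distinct in auto)
  have "x = xs ! j" "y = xs ! j"
    using slice_id_nth[OF xs ij j w x(1) id] slice_id_nth[OF xs ij j w y(1) id]
      const[rule_format, OF x(1)] const[rule_format, OF y(1)] x(2) y(2)
    by simp_all
  with \<open>x \<noteq> y\<close> show False
    by simp
qed

lemma projection_if_slice_id:
  assumes i: "i < n" and xs: "xs \<in> tuples n {a, b, c}" and id: "\<forall>v \<in> {a, b, c}. \<phi> (xs[i := v]) = v"
    and ys: "ys \<in> tuples n {a, b, c}"
  shows "\<phi> ys = ys ! i"
proof -
  have "\<forall>v \<in> {a, b, c}. \<phi> (ys[i := v]) = v"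
    using xs ys id
  proof (rule tuples_update_induct)
    fix zs j w
    assume "zs \<in> tuples n {a, b, c}" "j < n" "w \<in> {a, b, c}" "\<forall>v \<in> {a, b, c}. \<phi> (zs[i := v]) = v"
    then show "\<forall>v \<in> {a, b, c}. \<phi> (zs[j := w, i := v]) = v"
      using slice_id_update by (cases "i = j") simp_all
  qed
  then show ?thesis
    using tuples_nth[OF ys i] by (metis list_update_id)
qed

lemma projection_or_constant:
  "(\<exists>i<n. \<forall>xs \<in> tuples n {a, b, c}. \<phi> xs = xs ! i) \<or>
   (\<forall>xs \<in> tuples n {a, b, c}. \<phi> xs = \<phi> (replicate n a))"
proof (cases "\<exists>i<n. \<exists>xs \<in> tuples n {a, b, c}. \<forall>v \<in> {a, b, c}. \<phi> (xs[i := v]) = v")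
  case True
  then show ?thesis
    using projection_if_slice_id by blast
next
  case False
  then have const: "\<phi> (zs[j := w]) = \<phi> (zs[j := a])"
    if "zs \<in> tuples n {a, b, c}" "j < n" "w \<in> {a, b, c}" for zs j w
    using slice_const_or_id[OF that(1), of j] that by blast
  have "\<phi> ys = \<phi> (replicate n a)" if ys: "ys \<in> tuples n {a, b, c}" for ys
  proof (rule tuples_update_induct[OF _ ys, where Q = "\<lambda>zs. \<phi> zs = \<phi> (replicate n a)"])
    show "replicate n a \<in> tuples n {a, b, c}"
      by (auto simp: mem_tuples)
  next
    fix zs j w
    assume "zs \<in> tuples n {a, b, c}" "j < n" "w \<in> {a, b, c}" "\<phi> zs = \<phi> (replicate n a)"
    then show "\<phi> (zs[j := w]) = \<phi> (replicate n a)"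
      using const tuples_nth by (metis list_update_id)
  qed simp
  then show ?thesis
    by blast
qed

end

section \<open>Interpolation on leaf arguments\<close>

lemma congruence_preserving_relabel_leaves:
  assumes "congruence_preserving n g" "length xs = n" "length ys = n" "map \<rho> xs = map \<rho> ys"
  shows "relabel \<rho> (g (map leaf xs)) = relabel \<rho> (g (map leaf ys))"
proof (rule congruence_preserving_hom_eq[OF assms(1) star_hom_relabel])
  show "map leaf xs \<in> tuples n trees" "map leaf ys \<in> tuples n trees"
    using assms(2,3) by (simp_all add: map_leaf_in_tuples)
  show "\<forall>i<n. relabel \<rho> (map leaf xs ! i) = relabel \<rho> (map leaf ys ! i)"
    using assms(2-4) by (metis nth_map relabel_leaf)
qed

lemma congruence_preserving_leaves_shape:
  assumes cp: "congruence_preserving n g" and "length xs = n" "length ys = n"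
  shows "fst ` g (map leaf xs) = fst ` g (map leaf ys)"
proof -
  have "map (\<lambda>_. undefined) xs = map (\<lambda>_. undefined) ys"
    using assms(2,3) by (simp add: map_replicate_const)
  then have "fst ` relabel (\<lambda>_. undefined) (g (map leaf xs)) = fst ` relabel (\<lambda>_. undefined) (g (map leaf ys))"
    using congruence_preserving_relabel_leaves[OF cp assms(2,3)] by metis
  then show ?thesis
    unfolding fst_relabel .
qed

lemma congruence_preserving_leaves_label:
  assumes cp: "congruence_preserving n g" and trees: "\<forall>ts \<in> tuples n trees. is_tree (g ts)"
    and abc: "a \<noteq> b" "a \<noteq> c" "b \<noteq> c" and u: "u \<in> fst ` g (map leaf (replicate n a))"
  shows "\<exists>d. (\<forall>i. d = Inr i \<longrightarrow> i < n) \<and>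
    (\<forall>xs \<in> tuples n {a, b, c}. label (g (map leaf xs)) u = case_sum id ((!) xs) d)"
proof -
  interpret relabeling_compatible "\<lambda>xs. label (g (map leaf xs)) u" a b c n
  proof
    show "a \<noteq> b" "a \<noteq> c" "b \<noteq> c"
      by (fact abc)+
    fix \<rho> :: "'a \<Rightarrow> 'a" and xs ys
    assume "xs \<in> tuples n {a, b, c}" "ys \<in> tuples n {a, b, c}" and eq: "map \<rho> xs = map \<rho> ys"
    then have len: "length xs = n" "length ys = n"
      by (simp_all add: mem_tuples)
    have "is_tree (g (map leaf xs))" "is_tree (g (map leaf ys))"
      using trees map_leaf_in_tuples[OF len(1)] map_leaf_in_tuples[OF len(2)] by simp_all
    moreover have "u \<in> fst ` g (map leaf xs)"
      using u congruence_preserving_leaves_shape[OF cp len(1), of "replicate n a"] by simp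
    ultimately show "\<rho> (label (g (map leaf xs)) u) = \<rho> (label (g (map leaf ys)) u)"
      using label_relabel congruence_preserving_relabel_leaves[OF cp len eq] by blast
  qed
  from projection_or_constant show ?thesis
  proof
    assume "\<exists>i<n. \<forall>xs \<in> tuples n {a, b, c}. label (g (map leaf xs)) u = xs ! i"
    then obtain i where "i < n" "\<forall>xs \<in> tuples n {a, b, c}. label (g (map leaf xs)) u = xs ! i"
      by blast
    then show ?thesis
      by (intro exI[of _ "Inr i"]) simp
  next
    let ?m = "label (g (map leaf (replicate n a))) u"
    assume "\<forall>xs \<in> tuples n {a, b, c}. label (g (map leaf xs)) u = ?m"
    then show ?thesis
      by (intro exI[of _ "Inl ?m"]) simp
  qed
qed

lemma congruence_preserving_interpolating_poly:
  assumes cp: "congruence_preserving n g" and trees: "\<forall>ts \<in> tuples n trees. is_tree (g ts)"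
    and abc: "a \<noteq> b" "a \<noteq> c" "b \<noteq> c"
  obtains P where "is_poly n P"
    and "\<And>xs. xs \<in> tuples n {a, b, c} \<Longrightarrow> g (map leaf xs) = poly_subst P (map leaf xs)"
proof -
  define D where "D = fst ` g (map leaf (replicate n a))"
  have "\<forall>u \<in> D. \<exists>d. (\<forall>i. d = Inr i \<longrightarrow> i < n) \<and>
      (\<forall>xs \<in> tuples n {a, b, c}. label (g (map leaf xs)) u = case_sum id ((!) xs) d)"
    unfolding D_def using congruence_preserving_leaves_label[OF cp trees abc] by blast
  then obtain lab where lab: "\<forall>u \<in> D. (\<forall>i. lab u = Inr i \<longrightarrow> i < n) \<and>
      (\<forall>xs \<in> tuples n {a, b, c}. label (g (map leaf xs)) u = case_sum id ((!) xs) (lab u))"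
    by (rule bchoice[THEN exE])
  define P where "P = (\<lambda>u. (u, lab u)) ` D"
  have "is_tree (g (map leaf (replicate n a)))"
    using trees map_leaf_in_tuples[of "replicate n a" n] by simp
  then have "is_poly n P"
    using is_tree_graph[of _ lab] lab
    unfolding is_poly_def P_def D_def by auto
  moreover have "g (map leaf xs) = poly_subst P (map leaf xs)" if xs: "xs \<in> tuples n {a, b, c}" for xs
  proof -
    have len: "length xs = n"
      using xs by (simp add: mem_tuples)
    have tree: "is_tree (g (map leaf xs))"
      using trees map_leaf_in_tuples[OF len] by simp
    have "poly_subst P (map leaf xs) = (\<lambda>(u, c). (u, case_sum id ((!) xs) c)) ` P"
      using lab len by (intro poly_subst_map_leaf) (auto simp: P_def)
    also have "\<dots> = (\<lambda>u. (u, label (g (map leaf xs)) u)) ` D"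
      using lab xs unfolding P_def by (auto simp: image_iff)
    also have "\<dots> = (\<lambda>u. (u, label (g (map leaf xs)) u)) ` fst ` g (map leaf xs)"
      using congruence_preserving_leaves_shape[OF cp len, of "replicate n a"]
      unfolding D_def by simp
    also have "\<dots> = g (map leaf xs)"
      using tree by (rule graph_label)
    finally show ?thesis ..
  qed
  ultimately show ?thesis
    using that by blast
qed

theorem mainTheorem1:
  fixes g :: "'a tree list \<Rightarrow> 'a tree" and n :: nat
  assumes "finite (UNIV :: 'a set)" and "card (UNIV :: 'a set) \<ge> 3"
    and "n \<ge> 1"
    and "\<forall>ts. length ts = n \<and> set ts \<subseteq> trees \<longrightarrow> g ts \<in> trees"
    and "congruence_preserving n g"
  shows "\<exists>P. is_poly n P \<and>
           (\<forall>ts. length ts = n \<and> set ts \<subseteq> trees \<longrightarrow> g ts = poly_fun P ts)"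
proof -
  obtain T :: "'a set" where "card T = 3"
    using obtain_subset_with_card_n[OF assms(2)] by metis
  then obtain a b c :: 'a where abc: "a \<noteq> b" "a \<noteq> c" "b \<noteq> c"
    unfolding card_3_iff by blast
  have g_trees: "\<forall>ts \<in> tuples n trees. is_tree (g ts)"
    using assms(4) unfolding tuples_def trees_def by simp
  obtain P where P: "is_poly n P"
    and interpolates: "\<And>xs. xs \<in> tuples n {a, b, c} \<Longrightarrow> g (map leaf xs) = poly_subst P (map leaf xs)"
    using congruence_preserving_interpolating_poly[OF assms(5) g_trees abc] by blast
  have "\<forall>ts \<in> tuples n trees. is_tree (poly_subst P ts)"
    using is_tree_poly_subst[OF P] by blast
  moreover have "\<forall>xs \<in> tuples n {a, b}. g (map leaf xs) = poly_subst P (map leaf xs)"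
    using interpolates tuples_mono[of "{a, b}" "{a, b, c}" n] by blast
  ultimately have "g ts = poly_subst P ts" if "ts \<in> tuples n trees" for ts
    using congruence_preserving_eq_if_eq_on_leaves[OF assms(5) congruence_preserving_poly_subst[OF P]]
      g_trees abc(1) that by blast
  moreover have "is_tree P"
    using P unfolding is_poly_def by simp
  ultimately show ?thesis
    using P poly_fun_eq_poly_subst by (metis mem_tuples)
qed

end
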